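(* Let $n\ge 2$, let $m$ be a positive integer and $m_1\le m_2$ positive integers with $n=\tfrac12(m_1+m_2)m+2$, and let $\phi$ be a homogeneous polynomial on $\mathbb{R}^n$ of degree $m$ satisfying $$|\nabla\phi(x)|^2=m^2|x|^{2m-2},\qquad \Delta\phi(x)=\tfrac12(m_2-m_1)m^2|x|^{m-2}\qquad (x\in\mathbb{R}^n).$$ Put $s=|x|^m$, $t=\phi(x)$, $\mu=\tfrac12(m_1+m_2)$, $\nu=\tfrac12(m_2-m_1)$, and for a $C^2$-function $f=f(s,t)$ set $$h=f_ss+f_tt,\qquad A=(f_s^2+f_t^2)s+2f_sf_tt,\qquad B=(f_sA_s+f_tA_t)s+(f_sA_t+f_tA_s)t,$$ $$C=(f_{ss}+f_{tt})s+2f_{st}t+(\mu+1)f_s+\nu f_t .$$ Then, for every real $p$ and every $C^2$-function $f$, $$\Delta_p\, f(|x|^m,\phi(x))=m^4 s^{1-4/m}\Big(sAC+\tfrac{p-2}{2}sB+\tfrac{(m-2)(p-2)}{2m}Ah\Big),$$ where the right-hand side is evaluated at $(s,t)=(|x|^m,\phi(x))$. In particular $u(x)=f(|x|^m,\phi(x))$ is $p$-harmonic if and only if $$sAC+\tfrac{p-2}{2}sB+\tfrac{(m-2)(p-2)}{2m}Ah=0 .$$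
   Context: For real $p$ the $p$-Laplacian of a $C^2$ function $u$ on a domain of $\mathbb{R}^n$ is $\Delta_p u:=|\nabla u|^2\Delta u+\tfrac{p-2}{2}\nabla u\cdot\nabla|\nabla u|^2$, and $u$ is called $p$-harmonic if $\Delta_p u=0$. Subscripts on $f$ and $A$ denote partial derivatives with respect to $s$ and $t$. *)

theory Defs
  imports "HOL-Analysis.Analysis"
begin

definition homogeneous_polynomial :: "nat \<Rightarrow> (real^'n \<Rightarrow> real) \<Rightarrow> bool" where
  "homogeneous_polynomial m \<phi> \<longleftrightarrow>
     (\<exists>(S :: ('n \<Rightarrow> nat) set) c. finite S \<and> (\<forall>\<alpha>\<in>S. (\<Sum>i\<in>UNIV. \<alpha> i) = m) \<and>
        (\<forall>x. \<phi> x = (\<Sum>\<alpha>\<in>S. c \<alpha> * (\<Prod>i\<in>UNIV. (x $ i) ^ \<alpha> i))))"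

definition partial :: "'n \<Rightarrow> (real^'n \<Rightarrow> real) \<Rightarrow> real^'n \<Rightarrow> real" where
  "partial i g x = deriv (\<lambda>h. g (x + h *\<^sub>R axis i 1)) 0"

definition grad :: "(real^'n \<Rightarrow> real) \<Rightarrow> real^'n \<Rightarrow> real^'n" where
  "grad g x = (\<chi> i. partial i g x)"

definition laplacian :: "(real^'n \<Rightarrow> real) \<Rightarrow> real^'n \<Rightarrow> real" where
  "laplacian g x = (\<Sum>i\<in>UNIV. partial i (partial i g) x)"

definition p_laplacian :: "real \<Rightarrow> (real^'n \<Rightarrow> real) \<Rightarrow> real^'n \<Rightarrow> real" where
  "p_laplacian p g x =
     (norm (grad g x))\<^sup>2 * laplacian g x
     + (p - 2) / 2 * (grad g x \<bullet> grad (\<lambda>y. (norm (grad g y))\<^sup>2) x)"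

definition ds :: "(real \<times> real \<Rightarrow> real) \<Rightarrow> real \<times> real \<Rightarrow> real" where
  "ds f = (\<lambda>(s,t). deriv (\<lambda>\<sigma>. f (\<sigma>, t)) s)"

definition dt :: "(real \<times> real \<Rightarrow> real) \<Rightarrow> real \<times> real \<Rightarrow> real" where
  "dt f = (\<lambda>(s,t). deriv (\<lambda>\<tau>. f (s, \<tau>)) t)"

definition C2_on :: "(real \<times> real) set \<Rightarrow> (real \<times> real \<Rightarrow> real) \<Rightarrow> bool" where
  "C2_on U f \<longleftrightarrow> open U \<and>
     (\<forall>g\<in>{f, ds f, dt f}. \<forall>(s,t)\<in>U.
        (\<lambda>\<sigma>. g (\<sigma>, t)) differentiable (at s) \<and> (\<lambda>\<tau>. g (s, \<tau>)) differentiable (at t)) \<and>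
     (\<forall>g\<in>{f, ds f, dt f, ds (ds f), ds (dt f), dt (ds f), dt (dt f)}. continuous_on U g)"

definition hfun :: "(real \<times> real \<Rightarrow> real) \<Rightarrow> real \<times> real \<Rightarrow> real" where
  "hfun f = (\<lambda>(s,t). ds f (s,t) * s + dt f (s,t) * t)"

definition Afun :: "(real \<times> real \<Rightarrow> real) \<Rightarrow> real \<times> real \<Rightarrow> real" where
  "Afun f = (\<lambda>(s,t). ((ds f (s,t))\<^sup>2 + (dt f (s,t))\<^sup>2) * s + 2 * ds f (s,t) * dt f (s,t) * t)"

definition Bfn :: "(real \<times> real \<Rightarrow> real) \<Rightarrow> real \<times> real \<Rightarrow> real" where
  "Bfn f = (\<lambda>(s,t).
     (ds f (s,t) * ds (Afun f) (s,t) + dt f (s,t) * dt (Afun f) (s,t)) * s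
     + (ds f (s,t) * dt (Afun f) (s,t) + dt f (s,t) * ds (Afun f) (s,t)) * t)"

definition Cfun :: "real \<Rightarrow> real \<Rightarrow> (real \<times> real \<Rightarrow> real) \<Rightarrow> real \<times> real \<Rightarrow> real" where
  "Cfun \<mu> \<nu> f = (\<lambda>(s,t).
     (ds (ds f) (s,t) + dt (dt f) (s,t)) * s + 2 * ds (dt f) (s,t) * t
     + (\<mu> + 1) * ds f (s,t) + \<nu> * dt f (s,t))"

end

theory Submission
  imports Defs
begin

text \<open>
  Write S x = |x|^m, kappa = m^2 |x|^(m-2) and u = f (S, phi). Euler's relation
  x . grad phi = m phi, the formula grad S = m |x|^(m-2) x and the eikonal equation show that
  the Gram matrix of grad S and grad phi is kappa [[s, t], [t, s]], while Delta S = (mu + 1) kappa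
  (this is where n = mu m + 2 enters) and Delta phi = nu kappa. The chain rule for f (S, phi)
  therefore gives |grad u|^2 = kappa A, Delta u = kappa C and grad u . grad (A (S, phi)) = kappa B.
  Differentiating |grad u|^2 = kappa(|x|) A by the product rule adds the radial term
  A (grad kappa . grad u) = m (m - 2) kappa A h / |x|^2, because x . grad u = m h. Collecting terms,
  Delta_p u = (kappa^2 / s) (s A C + (p-2)/2 s B + (m-2)(p-2)/(2m) A h), and kappa^2 / s = m^4 s^(1 - 4/m).
\<close>

section \<open>Partial derivatives and gradients on R^n\<close>

lemma partial_eq_frechet:
  fixes g :: "real^'n \<Rightarrow> real"
  assumes "(g has_derivative G) (at y)"
  shows "partial i g y = G (axis i 1)"
proof -
  have "((\<lambda>h. y + h *\<^sub>R axis i (1::real)) has_derivative (\<lambda>h. h *\<^sub>R axis i 1)) (at 0)"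
    by (auto intro!: derivative_eq_intros)
  moreover have "(g has_derivative G) (at (y + 0 *\<^sub>R axis i 1))" using assms by simp
  ultimately have "((\<lambda>h. g (y + h *\<^sub>R axis i 1)) has_derivative (\<lambda>h. G (h *\<^sub>R axis i 1))) (at 0)"
    by (rule has_derivative_compose)
  moreover have "(\<lambda>h. G (h *\<^sub>R axis i 1)) = (*) (G (axis i 1))"
    using assms has_derivative_linear by (force simp: linear_scale)
  ultimately have "((\<lambda>h. g (y + h *\<^sub>R axis i 1)) has_field_derivative G (axis i 1)) (at 0)"
    by (simp add: has_field_derivative_def)
  then show ?thesis unfolding partial_def by (rule DERIV_imp_deriv)
qed

lemma partial_eq_grad_nth: "partial i g y = grad g y $ i"
  by (simp add: grad_def)

lemma grad_eq_of_has_derivative: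
  fixes g :: "real^'n \<Rightarrow> real"
  assumes "(g has_derivative (\<lambda>v. a \<bullet> v)) (at y)"
  shows "grad g y = a"
  using partial_eq_frechet[OF assms] by (simp add: grad_def vec_eq_iff inner_axis)

lemma has_derivative_grad:
  fixes g :: "real^'n \<Rightarrow> real"
  assumes "g differentiable (at y)"
  shows "(g has_derivative (\<lambda>v. grad g y \<bullet> v)) (at y)"
proof -
  obtain G where G: "(g has_derivative G) (at y)" using assms differentiable_def by blast
  have lin: "linear G" using G has_derivative_linear by blast
  have "G v = grad g y \<bullet> v" for v
  proof -
    have "G v = G (\<Sum>i\<in>UNIV. v$i *\<^sub>R axis i 1)"
      using basis_expansion[of v] by (simp add: scalar_mult_eq_scaleR)
    also have "\<dots> = (\<Sum>i\<in>UNIV. v$i * G (axis i 1))"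
      by (simp add: linear_sum[OF lin] linear_scale[OF lin])
    finally show ?thesis by (simp add: grad_def inner_vec_def partial_eq_frechet[OF G] mult.commute)
  qed
  then have "G = (\<lambda>v. grad g y \<bullet> v)" by blast
  with G show ?thesis by simp
qed

lemma partial_cong:
  fixes g h :: "real^'n \<Rightarrow> real"
  assumes "open N" "y \<in> N" "\<And>z. z \<in> N \<Longrightarrow> g z = h z"
  shows "partial i g y = partial i h y"
proof -
  have "open ((\<lambda>k. y + k *\<^sub>R axis i (1::real)) -` N)"
    by (intro continuous_open_vimage assms(1)) (auto intro!: continuous_intros)
  then have "eventually (\<lambda>k. y + k *\<^sub>R axis i (1::real) \<in> N) (nhds 0)"
    using eventually_nhds_in_open[of _ 0] assms(2) by force
  then have "eventually (\<lambda>k. g (y + k *\<^sub>R axis i 1) = h (y + k *\<^sub>R axis i 1)) (nhds 0)"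
    by (rule eventually_mono) (use assms(3) in auto)
  then show ?thesis unfolding partial_def by (rule deriv_cong_ev) simp
qed

lemma grad_cong:
  fixes g h :: "real^'n \<Rightarrow> real"
  assumes "open N" "y \<in> N" "\<And>z. z \<in> N \<Longrightarrow> g z = h z"
  shows "grad g y = grad h y"
  using partial_cong[OF assms] by (simp add: grad_def)

lemma partial_add:
  fixes g h :: "real^'n \<Rightarrow> real"
  assumes "g differentiable (at y)" "h differentiable (at y)"
  shows "partial i (\<lambda>x. g x + h x) y = partial i g y + partial i h y"
  using partial_eq_frechet[OF has_derivative_add[OF has_derivative_grad[OF assms(1)]
        has_derivative_grad[OF assms(2)]]]
  by (simp add: inner_axis grad_def)

lemma partial_mult:
  fixes g h :: "real^'n \<Rightarrow> real"
  assumes "g differentiable (at y)" "h differentiable (at y)"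
  shows "partial i (\<lambda>x. g x * h x) y = g y * partial i h y + partial i g y * h y"
  using partial_eq_frechet[OF has_derivative_mult[OF has_derivative_grad[OF assms(1)]
        has_derivative_grad[OF assms(2)]]]
  by (simp add: inner_axis grad_def)

lemma grad_mult:
  fixes g h :: "real^'n \<Rightarrow> real"
  assumes "g differentiable (at y)" "h differentiable (at y)"
  shows "grad (\<lambda>x. g x * h x) y = g y *\<^sub>R grad h y + h y *\<^sub>R grad g y"
  using partial_mult[OF assms] by (simp add: grad_def vec_eq_iff)

lemma grad_radial:
  fixes y :: "real^'n"
  assumes "y \<noteq> 0" and "(F has_real_derivative F') (at (norm y))"
  shows "(\<lambda>y. F (norm y)) differentiable (at y)"
    and "grad (\<lambda>y. F (norm y)) y = (F' / norm y) *\<^sub>R y"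
proof -
  have "((\<lambda>y. F (norm y)) has_derivative (\<lambda>v. (v \<bullet> sgn y) * F')) (at y)"
    using DERIV_compose_FDERIV[OF assms(2) has_derivative_norm[OF assms(1)]] .
  moreover have "(\<lambda>v. (v \<bullet> sgn y) * F') = (\<lambda>v. ((F' / norm y) *\<^sub>R y) \<bullet> v)"
    by (simp add: fun_eq_iff sgn_div_norm inner_commute divide_inverse)
  ultimately have D: "((\<lambda>y. F (norm y)) has_derivative (\<lambda>v. ((F' / norm y) *\<^sub>R y) \<bullet> v)) (at y)"
    by simp
  then show "(\<lambda>y. F (norm y)) differentiable (at y)" unfolding differentiable_def by blast
  show "grad (\<lambda>y. F (norm y)) y = (F' / norm y) *\<^sub>R y" by (rule grad_eq_of_has_derivative[OF D])
qed

section \<open>Functions of two variables\<close>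

lemma ds_eq_frechet:
  fixes g :: "real \<times> real \<Rightarrow> real"
  assumes "(g has_derivative G) (at (s,t))"
  shows "ds g (s,t) = G (1,0)"
proof -
  have lin: "linear G" using assms has_derivative_linear by blast
  have "((\<lambda>h. (h, t)) has_derivative (\<lambda>h. (h, 0))) (at s)"
    by (auto intro!: derivative_eq_intros)
  then have "((\<lambda>h. g (h, t)) has_derivative (\<lambda>h. G (h, 0))) (at s)"
    using has_derivative_compose[of "\<lambda>h. (h, t)" _ s UNIV g G] assms by simp
  moreover have "(\<lambda>h. G (h, 0)) = (\<lambda>h. G (1, 0) * h)"
  proof
    fix h :: real
    show "G (h, 0) = G (1, 0) * h" using linear_scale[OF lin, of h "(1,0)"] by simp
  qed
  ultimately have "((\<lambda>h. g (h, t)) has_field_derivative G (1, 0)) (at s)"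
    by (simp add: has_field_derivative_def)
  then show ?thesis unfolding ds_def by (simp add: DERIV_imp_deriv)
qed

lemma dt_eq_frechet:
  fixes g :: "real \<times> real \<Rightarrow> real"
  assumes "(g has_derivative G) (at (s,t))"
  shows "dt g (s,t) = G (0,1)"
proof -
  have lin: "linear G" using assms has_derivative_linear by blast
  have "((\<lambda>h. (s, h)) has_derivative (\<lambda>h. (0, h))) (at t)"
    by (auto intro!: derivative_eq_intros)
  then have "((\<lambda>h. g (s, h)) has_derivative (\<lambda>h. G (0, h))) (at t)"
    using has_derivative_compose[of "\<lambda>h. (s, h)" _ t UNIV g G] assms by simp
  moreover have "(\<lambda>h. G (0, h)) = (\<lambda>h. G (0, 1) * h)"
  proof
    fix h :: real
    show "G (0, h) = G (0, 1) * h" using linear_scale[OF lin, of h "(0,1)"] by simp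
  qed
  ultimately have "((\<lambda>h. g (s, h)) has_field_derivative G (0, 1)) (at t)"
    by (simp add: has_field_derivative_def)
  then show ?thesis unfolding dt_def by (simp add: DERIV_imp_deriv)
qed

lemma has_derivative_ds_dt:
  fixes g :: "real \<times> real \<Rightarrow> real"
  assumes "g differentiable (at z)"
  shows "(g has_derivative (\<lambda>v. fst v * ds g z + snd v * dt g z)) (at z)"
proof -
  obtain G where G: "(g has_derivative G) (at z)" using assms differentiable_def by blast
  have lin: "linear G" using G has_derivative_linear by blast
  have "G v = fst v * G (1,0) + snd v * G (0,1)" for v
  proof -
    have "G v = G (fst v *\<^sub>R (1,0) + snd v *\<^sub>R (0,1))" by (cases v) simp
    also have "\<dots> = fst v *\<^sub>R G (1,0) + snd v *\<^sub>R G (0,1)"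
      by (simp only: linear_add[OF lin] linear_scale[OF lin])
    finally show ?thesis by simp
  qed
  then have "G = (\<lambda>v. fst v * G (1,0) + snd v * G (0,1))" by blast
  with G show ?thesis
    using ds_eq_frechet[of g G "fst z" "snd z"] dt_eq_frechet[of g G "fst z" "snd z"] by simp
qed

lemma grad_comp_pair:
  fixes g :: "real \<times> real \<Rightarrow> real" and S P :: "real^'n \<Rightarrow> real"
  assumes "g differentiable (at (S y, P y))" "S differentiable (at y)" "P differentiable (at y)"
  shows "(\<lambda>y. g (S y, P y)) differentiable (at y)"
    and "grad (\<lambda>y. g (S y, P y)) y
           = ds g (S y, P y) *\<^sub>R grad S y + dt g (S y, P y) *\<^sub>R grad P y"
proof -
  have "((\<lambda>y. (S y, P y)) has_derivative (\<lambda>v. (grad S y \<bullet> v, grad P y \<bullet> v))) (at y)"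
    using has_derivative_Pair[OF has_derivative_grad[OF assms(2)] has_derivative_grad[OF assms(3)]] .
  from has_derivative_compose[OF this has_derivative_ds_dt[OF assms(1)]]
  have D: "((\<lambda>y. g (S y, P y)) has_derivative
      (\<lambda>v. (ds g (S y, P y) *\<^sub>R grad S y + dt g (S y, P y) *\<^sub>R grad P y) \<bullet> v)) (at y)"
    by (simp add: inner_add_left algebra_simps)
  then show "(\<lambda>y. g (S y, P y)) differentiable (at y)" unfolding differentiable_def by blast
  show "grad (\<lambda>y. g (S y, P y)) y
      = ds g (S y, P y) *\<^sub>R grad S y + dt g (S y, P y) *\<^sub>R grad P y"
    by (rule grad_eq_of_has_derivative[OF D])
qed

lemma differentiable_of_continuous_dt:
  fixes g :: "real \<times> real \<Rightarrow> real"
  assumes "open U" "z \<in> U"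
    and ds_ex: "\<And>s t. (s,t) \<in> U \<Longrightarrow> (\<lambda>\<sigma>. g (\<sigma>,t)) differentiable (at s)"
    and dt_ex: "\<And>s t. (s,t) \<in> U \<Longrightarrow> (\<lambda>\<tau>. g (s,\<tau>)) differentiable (at t)"
    and "continuous_on U (dt g)"
  shows "g differentiable (at z)"
proof -
  obtain s t where z: "z = (s,t)" by fastforce
  obtain X B where XB: "open X" "open B" "(s,t) \<in> X \<times> B" "X \<times> B \<subseteq> U"
    using open_prod_elim[OF assms(1)] assms(2) z by metis
  obtain e where "e > 0" "ball t e \<subseteq> B" using XB(2,3) open_contains_ball by blast
  define Y where "Y = ball t e"
  have XY: "open X" "open Y" "s \<in> X" "t \<in> Y" "X \<times> Y \<subseteq> U" "convex Y"
    using XB \<open>e > 0\<close> \<open>ball t e \<subseteq> B\<close> by (auto simp: Y_def)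
  obtain D where "((\<lambda>\<sigma>. g (\<sigma>,t)) has_derivative D) (at s)"
    using ds_ex[of s t] assms(2) z unfolding differentiable_def by auto
  then have Dx: "((\<lambda>\<sigma>. g (\<sigma>,t)) has_derivative D) (at s within X)"
    by (rule has_derivative_at_withinI)
  have Dy: "((\<lambda>\<tau>. g (\<sigma>, \<tau>)) has_derivative blinfun_apply (blinfun_mult_right (dt g (\<sigma>,\<tau>))))
      (at \<tau> within Y)" if "\<sigma> \<in> X" "\<tau> \<in> Y" for \<sigma> \<tau>
  proof -
    have "(\<sigma>,\<tau>) \<in> U" using XY that by auto
    then have "((\<lambda>\<tau>. g (\<sigma>, \<tau>)) has_real_derivative dt g (\<sigma>,\<tau>)) (at \<tau>)"
      using dt_ex by (simp add: dt_def DERIV_deriv_iff_real_differentiable)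
    then show ?thesis by (simp add: has_field_derivative_def has_derivative_at_withinI)
  qed
  have "isCont (dt g) (s,t)" using assms continuous_on_eq_continuous_at z by blast
  then have "isCont (\<lambda>w. blinfun_mult_right (dt g w)) (s,t)"
    by (rule bounded_linear.continuous[OF bounded_linear_blinfun_mult_right])
  then have "continuous (at (s,t) within X \<times> Y) (\<lambda>(\<sigma>,\<tau>). blinfun_mult_right (dt g (\<sigma>,\<tau>)))"
    by (simp add: continuous_at_imp_continuous_within case_prod_beta')
  from has_derivative_partialsI[OF Dx Dy this XY(4,6)]
  have "((\<lambda>(\<sigma>,\<tau>). g (\<sigma>,\<tau>)) has_derivative (\<lambda>(a, b). D a + blinfun_mult_right (dt g (s,t)) b))
      (at (s, t) within X \<times> Y)" .
  moreover have "at (s,t) within X \<times> Y = at (s,t)"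
    using XY by (intro at_within_open) (auto simp: open_Times)
  ultimately show ?thesis unfolding z differentiable_def by auto
qed

lemma second_difference_dt_ds:
  fixes g :: "real \<times> real \<Rightarrow> real"
  assumes "h > 0"
    and rect: "\<And>\<sigma> \<tau>. s \<le> \<sigma> \<Longrightarrow> \<sigma> \<le> s + h \<Longrightarrow> t \<le> \<tau> \<Longrightarrow> \<tau> \<le> t + h \<Longrightarrow> (\<sigma>,\<tau>) \<in> U"
    and ds_ex: "\<And>a b. (a,b) \<in> U \<Longrightarrow> (\<lambda>\<sigma>. g (\<sigma>,b)) differentiable (at a)"
    and dt_ds_ex: "\<And>a b. (a,b) \<in> U \<Longrightarrow> (\<lambda>\<tau>. ds g (a,\<tau>)) differentiable (at b)"
  obtains \<xi> \<eta> where "s < \<xi>" "\<xi> < s + h" "t < \<eta>" "\<eta> < t + h"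
    "g (s+h, t+h) - g (s+h, t) - g (s, t+h) + g (s, t) = h * h * dt (ds g) (\<xi>, \<eta>)"
proof -
  obtain \<xi> where \<xi>: "s < \<xi>" "\<xi> < s + h"
    "(g (s+h, t+h) - g (s+h, t)) - (g (s, t+h) - g (s, t)) = h * (ds g (\<xi>, t+h) - ds g (\<xi>, t))"
    using MVT2[of s "s+h" "\<lambda>\<sigma>. g (\<sigma>, t+h) - g (\<sigma>, t)" "\<lambda>\<sigma>. ds g (\<sigma>, t+h) - ds g (\<sigma>, t)"] \<open>h > 0\<close>
    by (force intro!: derivative_intros ds_ex rect simp: ds_def DERIV_deriv_iff_real_differentiable)
  obtain \<eta> where \<eta>: "t < \<eta>" "\<eta> < t + h"
    "ds g (\<xi>, t+h) - ds g (\<xi>, t) = h * dt (ds g) (\<xi>, \<eta>)"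
    using MVT2[of t "t+h" "\<lambda>\<tau>. ds g (\<xi>, \<tau>)" "\<lambda>\<tau>. dt (ds g) (\<xi>, \<tau>)"] \<open>h > 0\<close> \<xi>(1,2)
    by (force intro!: dt_ds_ex rect simp: dt_def DERIV_deriv_iff_real_differentiable)
  show ?thesis using that[OF \<xi>(1,2) \<eta>(1,2)] \<xi>(3) \<eta>(3) by (simp add: algebra_simps)
qed

lemma second_difference_ds_dt:
  fixes g :: "real \<times> real \<Rightarrow> real"
  assumes "h > 0"
    and rect: "\<And>\<sigma> \<tau>. s \<le> \<sigma> \<Longrightarrow> \<sigma> \<le> s + h \<Longrightarrow> t \<le> \<tau> \<Longrightarrow> \<tau> \<le> t + h \<Longrightarrow> (\<sigma>,\<tau>) \<in> U"
    and dt_ex: "\<And>a b. (a,b) \<in> U \<Longrightarrow> (\<lambda>\<tau>. g (a,\<tau>)) differentiable (at b)"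
    and ds_dt_ex: "\<And>a b. (a,b) \<in> U \<Longrightarrow> (\<lambda>\<sigma>. dt g (\<sigma>,b)) differentiable (at a)"
  obtains \<xi> \<eta> where "s < \<xi>" "\<xi> < s + h" "t < \<eta>" "\<eta> < t + h"
    "g (s+h, t+h) - g (s+h, t) - g (s, t+h) + g (s, t) = h * h * ds (dt g) (\<xi>, \<eta>)"
proof -
  obtain \<eta> where \<eta>: "t < \<eta>" "\<eta> < t + h"
    "(g (s+h, t+h) - g (s, t+h)) - (g (s+h, t) - g (s, t)) = h * (dt g (s+h, \<eta>) - dt g (s, \<eta>))"
    using MVT2[of t "t+h" "\<lambda>\<tau>. g (s+h, \<tau>) - g (s, \<tau>)" "\<lambda>\<tau>. dt g (s+h, \<tau>) - dt g (s, \<tau>)"] \<open>h > 0\<close>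
    by (force intro!: derivative_intros dt_ex rect simp: dt_def DERIV_deriv_iff_real_differentiable)
  obtain \<xi> where \<xi>: "s < \<xi>" "\<xi> < s + h"
    "dt g (s+h, \<eta>) - dt g (s, \<eta>) = h * ds (dt g) (\<xi>, \<eta>)"
    using MVT2[of s "s+h" "\<lambda>\<sigma>. dt g (\<sigma>, \<eta>)" "\<lambda>\<sigma>. ds (dt g) (\<sigma>, \<eta>)"] \<open>h > 0\<close> \<eta>(1,2)
    by (force intro!: ds_dt_ex rect simp: ds_def DERIV_deriv_iff_real_differentiable)
  show ?thesis using that[OF \<xi>(1,2) \<eta>(1,2)] \<xi>(3) \<eta>(3) by (simp add: algebra_simps)
qed

lemma mixed_partials_meet_in_ball:
  fixes g :: "real \<times> real \<Rightarrow> real"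
  assumes "\<delta> > 0" "ball z \<delta> \<subseteq> U"
    and ds_ex: "\<And>a b. (a,b) \<in> U \<Longrightarrow> (\<lambda>\<sigma>. g (\<sigma>,b)) differentiable (at a)"
    and dt_ex: "\<And>a b. (a,b) \<in> U \<Longrightarrow> (\<lambda>\<tau>. g (a,\<tau>)) differentiable (at b)"
    and dt_ds_ex: "\<And>a b. (a,b) \<in> U \<Longrightarrow> (\<lambda>\<tau>. ds g (a,\<tau>)) differentiable (at b)"
    and ds_dt_ex: "\<And>a b. (a,b) \<in> U \<Longrightarrow> (\<lambda>\<sigma>. dt g (\<sigma>,b)) differentiable (at a)"
  obtains w w' where "w \<in> ball z \<delta>" "w' \<in> ball z \<delta>" "dt (ds g) w = ds (dt g) w'"
proof -
  obtain s t where z: "z = (s,t)" by fastforce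
  define h where "h = \<delta> / 3"
  have "h > 0" using \<open>\<delta> > 0\<close> by (simp add: h_def)
  have rect: "(\<sigma>,\<tau>) \<in> ball z \<delta>" if "s \<le> \<sigma>" "\<sigma> \<le> s + h" "t \<le> \<tau>" "\<tau> \<le> t + h" for \<sigma> \<tau>
  proof -
    have "dist (\<sigma>,\<tau>) z \<le> norm (\<sigma> - s) + norm (\<tau> - t)"
      using norm_Pair_le[of "\<sigma> - s" "\<tau> - t"] by (simp add: z dist_norm)
    then show ?thesis using that \<open>\<delta> > 0\<close> by (simp add: h_def dist_commute)
  qed
  have rect_U: "(\<sigma>,\<tau>) \<in> U" if "s \<le> \<sigma>" "\<sigma> \<le> s + h" "t \<le> \<tau>" "\<tau> \<le> t + h" for \<sigma> \<tau>
    using rect[OF that] assms(2) by blast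
  obtain \<xi> \<eta> where \<xi>\<eta>: "s < \<xi>" "\<xi> < s + h" "t < \<eta>" "\<eta> < t + h"
    "g (s+h, t+h) - g (s+h, t) - g (s, t+h) + g (s, t) = h * h * dt (ds g) (\<xi>, \<eta>)"
    by (rule second_difference_dt_ds[OF \<open>h > 0\<close> rect_U ds_ex dt_ds_ex])
  obtain \<xi>' \<eta>' where \<xi>'\<eta>': "s < \<xi>'" "\<xi>' < s + h" "t < \<eta>'" "\<eta>' < t + h"
    "g (s+h, t+h) - g (s+h, t) - g (s, t+h) + g (s, t) = h * h * ds (dt g) (\<xi>', \<eta>')"
    by (rule second_difference_ds_dt[OF \<open>h > 0\<close> rect_U dt_ex ds_dt_ex])
  show ?thesis
  proof (rule that)
    show "(\<xi>, \<eta>) \<in> ball z \<delta>" "(\<xi>', \<eta>') \<in> ball z \<delta>"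
      using rect \<xi>\<eta>(1-4) \<xi>'\<eta>'(1-4) by simp_all
    show "dt (ds g) (\<xi>, \<eta>) = ds (dt g) (\<xi>', \<eta>')"
      using \<xi>\<eta>(5) \<xi>'\<eta>'(5) \<open>h > 0\<close> by simp
  qed
qed

lemma dt_ds_eq_ds_dt:
  fixes g :: "real \<times> real \<Rightarrow> real"
  assumes "open U" "z \<in> U"
    and ds_ex: "\<And>a b. (a,b) \<in> U \<Longrightarrow> (\<lambda>\<sigma>. g (\<sigma>,b)) differentiable (at a)"
    and dt_ex: "\<And>a b. (a,b) \<in> U \<Longrightarrow> (\<lambda>\<tau>. g (a,\<tau>)) differentiable (at b)"
    and dt_ds_ex: "\<And>a b. (a,b) \<in> U \<Longrightarrow> (\<lambda>\<tau>. ds g (a,\<tau>)) differentiable (at b)"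
    and ds_dt_ex: "\<And>a b. (a,b) \<in> U \<Longrightarrow> (\<lambda>\<sigma>. dt g (\<sigma>,b)) differentiable (at a)"
    and "continuous_on U (dt (ds g))" "continuous_on U (ds (dt g))"
  shows "dt (ds g) z = ds (dt g) z"
proof (rule ccontr)
  assume "dt (ds g) z \<noteq> ds (dt g) z"
  define \<epsilon> where "\<epsilon> = \<bar>dt (ds g) z - ds (dt g) z\<bar> / 2"
  have "\<epsilon> > 0" using \<open>dt (ds g) z \<noteq> ds (dt g) z\<close> by (simp add: \<epsilon>_def)
  have "isCont (dt (ds g)) z" "isCont (ds (dt g)) z"
    using assms continuous_on_eq_continuous_at by blast+
  then have "eventually (\<lambda>w. \<bar>dt (ds g) w - dt (ds g) z\<bar> < \<epsilon>) (nhds z)"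
    "eventually (\<lambda>w. \<bar>ds (dt g) w - ds (dt g) z\<bar> < \<epsilon>) (nhds z)"
    using \<open>\<epsilon> > 0\<close> unfolding isCont_def tendsto_iff eventually_at_filter dist_real_def
    by (force elim: eventually_mono)+
  moreover have "eventually (\<lambda>w. w \<in> U) (nhds z)" using assms(1,2) by (rule eventually_nhds_in_open)
  ultimately have "eventually (\<lambda>w. w \<in> U \<and> \<bar>dt (ds g) w - dt (ds g) z\<bar> < \<epsilon>
      \<and> \<bar>ds (dt g) w - ds (dt g) z\<bar> < \<epsilon>) (nhds z)"
    by eventually_elim blast
  then obtain \<delta> where "\<delta> > 0" and near: "\<And>w. w \<in> ball z \<delta> \<Longrightarrow> w \<in> U
      \<and> \<bar>dt (ds g) w - dt (ds g) z\<bar> < \<epsilon> \<and> \<bar>ds (dt g) w - ds (dt g) z\<bar> < \<epsilon>"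
    unfolding eventually_nhds_metric by (auto simp: dist_commute)
  then obtain w w' where "w \<in> ball z \<delta>" "w' \<in> ball z \<delta>" "dt (ds g) w = ds (dt g) w'"
    using mixed_partials_meet_in_ball[OF \<open>\<delta> > 0\<close> _ ds_ex dt_ex dt_ds_ex ds_dt_ex] by blast
  then show False
    using near[of w] near[of w']
      abs_triangle_ineq[of "dt (ds g) z - dt (ds g) w" "ds (dt g) w' - ds (dt g) z"]
    by (simp add: \<epsilon>_def abs_minus_commute)
qed

lemma C2_on_differentiable:
  assumes "C2_on U f" "z \<in> U"
  shows "f differentiable (at z)" and "ds f differentiable (at z)" and "dt f differentiable (at z)"
proof -
  have "g differentiable (at z)" if "g \<in> {f, ds f, dt f}" for g
  proof (rule differentiable_of_continuous_dt[of U])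
    show "continuous_on U (dt g)" using assms(1) that unfolding C2_on_def by auto
  qed (use assms that in \<open>auto simp: C2_on_def\<close>)
  then show "f differentiable (at z)" "ds f differentiable (at z)" "dt f differentiable (at z)"
    by auto
qed

lemma C2_on_dt_ds_eq:
  assumes "C2_on U f" "z \<in> U"
  shows "dt (ds f) z = ds (dt f) z"
  by (rule dt_ds_eq_ds_dt[of U]) (use assms in \<open>auto simp: C2_on_def\<close>)

section \<open>Homogeneous polynomials\<close>

lemma real_polynomial_function_partial:
  fixes g :: "real^'n \<Rightarrow> real"
  assumes "real_polynomial_function g"
  shows "real_polynomial_function (partial i g)"
  using assms
proof (induction rule: real_polynomial_function.induct)
  case (linear g)
  then have "partial i g = (\<lambda>y. g (axis i 1))"
    using partial_eq_frechet[OF bounded_linear_imp_has_derivative] by blast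
  then show ?case by (simp add: real_polynomial_function.intros)
next
  case (const c)
  have "partial i (\<lambda>x. c) = (\<lambda>y. 0)"
    by (simp add: fun_eq_iff partial_eq_frechet[OF has_derivative_const])
  then show ?case by (simp add: real_polynomial_function.intros)
next
  case (add g h)
  then show ?case
    by (simp add: partial_add differentiable_at_real_polynomial_function real_polynomial_function.intros)
next
  case (mult g h)
  then show ?case
    by (simp add: partial_mult differentiable_at_real_polynomial_function
        real_polynomial_function.intros)
qed

lemma homogeneous_polynomial_imp_real_polynomial_function:
  fixes \<phi> :: "real^'n \<Rightarrow> real"
  assumes "homogeneous_polynomial m \<phi>"
  shows "real_polynomial_function \<phi>"
proof -
  obtain S c where S: "finite S" "\<And>x. \<phi> x = (\<Sum>\<alpha>\<in>S. c \<alpha> * (\<Prod>i\<in>UNIV. (x $ i) ^ \<alpha> i))"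
    using assms unfolding homogeneous_polynomial_def by blast
  have "real_polynomial_function (\<lambda>x::real^'n. x $ i)" for i
    by (simp add: bounded_linear_vec_nth real_polynomial_function.intros)
  then have "real_polynomial_function (\<lambda>x. \<Sum>\<alpha>\<in>S. c \<alpha> * (\<Prod>i\<in>UNIV. (x $ i) ^ \<alpha> i))"
    using S(1) by (intro real_polynomial_function_sum real_polynomial_function.intros(4)
        real_polynomial_function.intros(2) real_polynomial_function_prod real_polynomial_function_power)
      simp_all
  then show ?thesis using S(2) by presburger
qed

lemma homogeneous_polynomial_scaleR:
  assumes "homogeneous_polynomial m \<phi>"
  shows "\<phi> (c *\<^sub>R y) = c ^ m * \<phi> y"
proof -
  obtain S e where S: "\<forall>\<alpha>\<in>S. (\<Sum>i\<in>UNIV. \<alpha> i) = m"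
    "\<And>x. \<phi> x = (\<Sum>\<alpha>\<in>S. e \<alpha> * (\<Prod>i\<in>UNIV. (x $ i) ^ \<alpha> i))"
    using assms unfolding homogeneous_polynomial_def by blast
  have "(\<Prod>i\<in>UNIV. (c * y $ i) ^ \<alpha> i) = c ^ m * (\<Prod>i\<in>UNIV. (y $ i) ^ \<alpha> i)" if "\<alpha> \<in> S" for \<alpha>
  proof -
    have "(\<Prod>i\<in>UNIV. c ^ \<alpha> i) = c ^ m" using S(1) that by (simp add: power_sum[symmetric])
    then show ?thesis by (simp only: power_mult_distrib prod.distrib)
  qed
  then show ?thesis by (simp add: S(2) sum_distrib_left algebra_simps cong: sum.cong)
qed

lemma homogeneous_polynomial_differentiable:
  fixes \<phi> :: "real^'n \<Rightarrow> real"
  assumes "homogeneous_polynomial m \<phi>"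
  shows "\<phi> differentiable (at y)" and "partial i \<phi> differentiable (at y)"
  using homogeneous_polynomial_imp_real_polynomial_function[OF assms]
  by (simp_all add: differentiable_at_real_polynomial_function real_polynomial_function_partial)

lemma homogeneous_polynomial_euler:
  assumes "homogeneous_polynomial m \<phi>"
  shows "y \<bullet> grad \<phi> y = real m * \<phi> y"
proof -
  have "((\<lambda>c::real. c *\<^sub>R y) has_derivative (\<lambda>c. c *\<^sub>R y)) (at 1)"
    by (auto intro!: derivative_eq_intros)
  then have "((\<lambda>c. \<phi> (c *\<^sub>R y)) has_derivative (\<lambda>c. grad \<phi> y \<bullet> (c *\<^sub>R y))) (at 1)"
    using has_derivative_compose[OF _ has_derivative_grad] homogeneous_polynomial_differentiable(1)[OF assms]
    by fastforce
  then have "((\<lambda>c. \<phi> (c *\<^sub>R y)) has_real_derivative y \<bullet> grad \<phi> y) (at 1)"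
    by (rule has_derivative_imp_has_field_derivative) (simp add: inner_commute)
  moreover have "((\<lambda>c. \<phi> (c *\<^sub>R y)) has_real_derivative real m * \<phi> y) (at 1)"
    unfolding homogeneous_polynomial_scaleR[OF assms] by (auto intro!: derivative_eq_intros)
  ultimately show ?thesis by (rule DERIV_unique)
qed

section \<open>Powers of the norm\<close>

lemma has_real_derivative_power_div:
  fixes r :: real
  assumes "r > 0"
  shows "((\<lambda>r. r ^ m) has_real_derivative real m * r ^ m / r) (at r)"
proof -
  have "real m * r ^ (m - 1) = real m * r ^ m / r"
    using assms by (cases m) simp_all
  then show ?thesis using DERIV_pow[of m r] by simp
qed

lemma has_real_derivative_power_div_square:
  fixes r :: real
  assumes "r > 0"
  shows "((\<lambda>r. r ^ m / r\<^sup>2) has_real_derivative (real m - 2) * r ^ m / r ^ 3) (at r)"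
proof -
  have "((\<lambda>r. r\<^sup>2) has_real_derivative 2 * r) (at r)" using DERIV_pow[of 2 r] by simp
  from DERIV_divide[OF has_real_derivative_power_div[OF assms] this]
  have "((\<lambda>r. r ^ m / r\<^sup>2) has_real_derivative
      ((real m * r ^ m / r) * r\<^sup>2 - r ^ m * (2 * r)) / (r\<^sup>2 * r\<^sup>2)) (at r)"
    using assms by simp
  moreover have "((real m * r ^ m / r) * r\<^sup>2 - r ^ m * (2 * r)) / (r\<^sup>2 * r\<^sup>2) = (real m - 2) * r ^ m / r ^ 3"
    using assms by (simp add: field_simps power2_eq_square power3_eq_cube)
  ultimately show ?thesis by simp
qed

lemma grad_norm_power:
  fixes y :: "real^'n"
  assumes "y \<noteq> 0"
  shows "(\<lambda>y. norm y ^ m) differentiable (at y)"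
    and "grad (\<lambda>y. norm y ^ m) y = (real m * norm y ^ m / (norm y)\<^sup>2) *\<^sub>R y"
proof -
  have "norm y > 0" using assms by simp
  note radial = grad_radial[OF assms has_real_derivative_power_div[OF this, of m]]
  show "(\<lambda>y. norm y ^ m) differentiable (at y)" by (rule radial(1))
  show "grad (\<lambda>y. norm y ^ m) y = (real m * norm y ^ m / (norm y)\<^sup>2) *\<^sub>R y"
    by (simp add: radial(2) power2_eq_square)
qed

lemma partial_nth_self: "partial i (\<lambda>y :: real^'n. y $ i) y = 1"
proof -
  have "((\<lambda>y :: real^'n. y $ i) has_derivative (\<lambda>y. y $ i)) (at y)"
    by (rule bounded_linear_imp_has_derivative[OF bounded_linear_vec_nth])
  from partial_eq_frechet[OF this] show ?thesis by simp
qed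

lemma partial_norm_power:
  fixes y :: "real^'n"
  assumes "y \<noteq> 0"
  shows "partial i (\<lambda>y. norm y ^ m) y = real m * (norm y ^ m / (norm y)\<^sup>2 * y $ i)"
  using assms by (simp add: partial_eq_grad_nth grad_norm_power)

lemma second_partial_norm_power:
  fixes y :: "real^'n"
  assumes "y \<noteq> 0"
  shows "partial i (\<lambda>y. norm y ^ m) differentiable (at y)"
    and "partial i (partial i (\<lambda>y. norm y ^ m)) y
           = real m * (norm y ^ m / (norm y)\<^sup>2
                       + (real m - 2) * (norm y ^ m / (norm y)\<^sup>2) / (norm y)\<^sup>2 * (y $ i)\<^sup>2)"
proof -
  have "norm y > 0" using assms by simp
  note radial = grad_radial[OF assms has_real_derivative_power_div_square[OF this, of m]]
  have nth: "(\<lambda>y :: real^'n. y $ i) differentiable (at y)"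
    by (rule bounded_linear_imp_differentiable[OF bounded_linear_vec_nth])
  have eq: "partial i (\<lambda>y. norm y ^ m) x = real m * (norm x ^ m / (norm x)\<^sup>2 * x $ i)" if "x \<in> - {0}" for x
    using partial_norm_power that by simp
  have "((\<lambda>x. real m * (norm x ^ m / (norm x)\<^sup>2 * x $ i)) has_derivative
      (\<lambda>v. grad (\<lambda>x. real m * (norm x ^ m / (norm x)\<^sup>2 * x $ i)) y \<bullet> v)) (at y)"
    by (intro has_derivative_grad differentiable_mult differentiable_const radial(1) nth)
  from has_derivative_transform_within_open[OF this open_Compl[OF closed_singleton] _ eq[symmetric]]
  show "partial i (\<lambda>y. norm y ^ m) differentiable (at y)"
    using assms unfolding differentiable_def by blast
  have "partial i (partial i (\<lambda>y. norm y ^ m)) y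
      = partial i (\<lambda>x. real m * (norm x ^ m / (norm x)\<^sup>2 * x $ i)) y"
    by (rule partial_cong[OF open_Compl[OF closed_singleton] _ eq]) (use assms in simp)
  also have "\<dots> = real m * partial i (\<lambda>x. norm x ^ m / (norm x)\<^sup>2 * x $ i) y"
    using partial_mult[OF differentiable_const differentiable_mult[OF radial(1) nth], of i "real m"]
    by (simp add: partial_eq_frechet[OF has_derivative_const])
  also have "\<dots> = real m * (norm y ^ m / (norm y)\<^sup>2
      + (real m - 2) * (norm y ^ m / (norm y)\<^sup>2) / (norm y)\<^sup>2 * (y $ i)\<^sup>2)"
    unfolding partial_mult[OF radial(1) nth] partial_eq_grad_nth[of i "\<lambda>z. norm z ^ m / (norm z)\<^sup>2"] radial(2)
    using \<open>norm y > 0\<close> by (simp add: partial_nth_self field_simps power2_eq_square power3_eq_cube)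
  finally show "partial i (partial i (\<lambda>y. norm y ^ m)) y
      = real m * (norm y ^ m / (norm y)\<^sup>2
                  + (real m - 2) * (norm y ^ m / (norm y)\<^sup>2) / (norm y)\<^sup>2 * (y $ i)\<^sup>2)" .
qed

lemma sum_square_nth_eq_norm: "(\<Sum>i\<in>UNIV. (y $ i)\<^sup>2) = (norm (y :: real^'n))\<^sup>2"
  unfolding power2_norm_eq_inner inner_vec_def by (simp add: power2_eq_square)

lemma laplacian_norm_power:
  fixes y :: "real^'n"
  assumes "y \<noteq> 0"
  shows "laplacian (\<lambda>y. norm y ^ m) y
           = real m * (real CARD('n) + real m - 2) * (norm y ^ m / (norm y)\<^sup>2)"
proof -
  have "laplacian (\<lambda>y. norm y ^ m) y = real m * (real CARD('n) * (norm y ^ m / (norm y)\<^sup>2)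
      + (real m - 2) * (norm y ^ m / (norm y)\<^sup>2) / (norm y)\<^sup>2 * (norm y)\<^sup>2)"
    by (simp add: laplacian_def second_partial_norm_power(2)[OF assms] sum.distrib sum_distrib_left[symmetric]
        sum_divide_distrib[symmetric] sum_square_nth_eq_norm)
  also have "\<dots> = real m * (real CARD('n) * (norm y ^ m / (norm y)\<^sup>2)
      + (real m - 2) * (norm y ^ m / (norm y)\<^sup>2))"
    using assms by (simp only: divide_inverse mult.assoc left_inverse power_not_zero norm_eq_zero
        mult_1_right not_False_eq_True)
  finally show ?thesis using assms by (simp add: field_simps)
qed

section \<open>Composites f (S x, P x)\<close>

lemma inner_grad_comp_pair:
  fixes g h :: "real \<times> real \<Rightarrow> real" and S P :: "real^'n \<Rightarrow> real" and y :: "real^'n"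
  defines "z \<equiv> (S y, P y)"
  assumes "g differentiable (at z)" "h differentiable (at z)"
    and "S differentiable (at y)" "P differentiable (at y)"
  shows "grad (\<lambda>y. g (S y, P y)) y \<bullet> grad (\<lambda>y. h (S y, P y)) y
           = ds g z * ds h z * (grad S y \<bullet> grad S y)
             + (ds g z * dt h z + dt g z * ds h z) * (grad S y \<bullet> grad P y)
             + dt g z * dt h z * (grad P y \<bullet> grad P y)"
  unfolding grad_comp_pair(2)[OF assms(2,4,5)[unfolded z_def]]
    grad_comp_pair(2)[OF assms(3,4,5)[unfolded z_def]] z_def[symmetric]
  by (simp add: inner_add_left inner_add_right inner_commute[of "grad P y" "grad S y"] algebra_simps)

lemma laplacian_comp_pair:
  fixes g :: "real \<times> real \<Rightarrow> real" and S P :: "real^'n \<Rightarrow> real" and y :: "real^'n"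
  defines "z \<equiv> (S y, P y)"
  assumes "open N" "y \<in> N"
    and diff: "\<And>x. x \<in> N \<Longrightarrow>
      g differentiable (at (S x, P x)) \<and> S differentiable (at x) \<and> P differentiable (at x)"
    and "ds g differentiable (at z)" "dt g differentiable (at z)"
    and "\<And>i. partial i S differentiable (at y)" "\<And>i. partial i P differentiable (at y)"
    and "dt (ds g) z = ds (dt g) z"
  shows "laplacian (\<lambda>y. g (S y, P y)) y
           = ds (ds g) z * (grad S y \<bullet> grad S y) + 2 * ds (dt g) z * (grad S y \<bullet> grad P y)
             + dt (dt g) z * (grad P y \<bullet> grad P y) + ds g z * laplacian S y + dt g z * laplacian P y"
proof -
  have SP: "S differentiable (at y)" "P differentiable (at y)" using diff assms(3) by blast+
  note d_ds = grad_comp_pair[of "ds g", OF _ SP, folded z_def, OF assms(5)]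
  note d_dt = grad_comp_pair[of "dt g", OF _ SP, folded z_def, OF assms(6)]
  have "partial i (partial i (\<lambda>y. g (S y, P y))) y
      = ds (ds g) z * (partial i S y * partial i S y)
        + 2 * ds (dt g) z * (partial i S y * partial i P y)
        + dt (dt g) z * (partial i P y * partial i P y)
        + ds g z * partial i (partial i S) y + dt g z * partial i (partial i P) y" for i
  proof -
    have "partial i (partial i (\<lambda>y. g (S y, P y))) y
        = partial i (\<lambda>x. ds g (S x, P x) * partial i S x + dt g (S x, P x) * partial i P x) y"
      by (rule partial_cong[OF assms(2,3)]) (simp add: partial_eq_grad_nth grad_comp_pair(2) diff)
    also have "\<dots> = ds g z * partial i (partial i S) y + partial i (\<lambda>x. ds g (S x, P x)) y * partial i S y
        + (dt g z * partial i (partial i P) y + partial i (\<lambda>x. dt g (S x, P x)) y * partial i P y)"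
      using d_ds(1) d_dt(1) assms(7,8)
      by (simp add: partial_add partial_mult differentiable_mult z_def)
    finally show ?thesis
      using assms(9) by (simp add: partial_eq_grad_nth[of i "\<lambda>x. ds g (S x, P x)"]
          partial_eq_grad_nth[of i "\<lambda>x. dt g (S x, P x)"] d_ds(2) d_dt(2)
          partial_eq_grad_nth[of i S] partial_eq_grad_nth[of i P] algebra_simps)
  qed
  then show ?thesis
    by (simp add: laplacian_def inner_vec_def grad_def sum.distrib sum_distrib_left)
qed

section \<open>The composite f (|x|^m, phi x)\<close>

lemma Afun_differentiable:
  assumes "ds f differentiable (at z)" "dt f differentiable (at z)"
  shows "Afun f differentiable (at z)"
proof -
  have "fst differentiable (at z)" "snd differentiable (at z)"
    by (simp_all add: bounded_linear_imp_differentiable bounded_linear_fst bounded_linear_snd)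
  then have "(\<lambda>w. ((ds f w)\<^sup>2 + (dt f w)\<^sup>2) * fst w + 2 * ds f w * dt f w * snd w) differentiable (at z)"
    using assms by (intro derivative_intros)
  moreover have "Afun f = (\<lambda>w. ((ds f w)\<^sup>2 + (dt f w)\<^sup>2) * fst w + 2 * ds f w * dt f w * snd w)"
    by (auto simp: Afun_def fun_eq_iff)
  ultimately show ?thesis by simp
qed

lemma gram_norm_power_homogeneous:
  fixes \<phi> :: "real^'n \<Rightarrow> real" and m :: nat and y :: "real^'n"
  defines "\<kappa> \<equiv> (real m)\<^sup>2 * (norm y ^ m / (norm y)\<^sup>2)"
  assumes "m > 0" "homogeneous_polynomial m \<phi>" "y \<noteq> 0"
    and eikonal: "(norm (grad \<phi> y))\<^sup>2 = (real m)\<^sup>2 * norm y ^ (2 * m - 2)"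
  shows "grad (\<lambda>y. norm y ^ m) y \<bullet> grad (\<lambda>y. norm y ^ m) y = \<kappa> * norm y ^ m"
    and "grad (\<lambda>y. norm y ^ m) y \<bullet> grad \<phi> y = \<kappa> * \<phi> y"
    and "grad \<phi> y \<bullet> grad \<phi> y = \<kappa> * norm y ^ m"
proof -
  have "norm y > 0" using assms by simp
  show "grad (\<lambda>y. norm y ^ m) y \<bullet> grad (\<lambda>y. norm y ^ m) y = \<kappa> * norm y ^ m"
    using \<open>norm y > 0\<close>
    by (simp add: grad_norm_power assms power2_norm_eq_inner[symmetric] \<kappa>_def field_simps power2_eq_square)
  show "grad (\<lambda>y. norm y ^ m) y \<bullet> grad \<phi> y = \<kappa> * \<phi> y"
    using homogeneous_polynomial_euler[OF assms(3), of y]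
    by (simp add: grad_norm_power assms \<kappa>_def power2_eq_square)
  have "2 * m - 2 + 2 = m + m" using \<open>m > 0\<close> by simp
  then have "norm y ^ (2 * m - 2) * (norm y)\<^sup>2 = norm y ^ m * norm y ^ m"
    by (metis power_add)
  then have "norm y ^ (2 * m - 2) = norm y ^ m * norm y ^ m / (norm y)\<^sup>2"
    using \<open>norm y > 0\<close> by (simp add: field_simps)
  then show "grad \<phi> y \<bullet> grad \<phi> y = \<kappa> * norm y ^ m"
    using eikonal by (simp add: power2_norm_eq_inner[symmetric] \<kappa>_def)
qed

lemma open_nonzero_preimage_norm_power_pair:
  fixes \<phi> :: "real^'n \<Rightarrow> real"
  assumes "open U" "homogeneous_polynomial m \<phi>"
  shows "open {x. x \<noteq> 0 \<and> (norm x ^ m, \<phi> x) \<in> U}"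
proof -
  have "continuous_on UNIV \<phi>"
    using homogeneous_polynomial_differentiable(1)[OF assms(2)]
    by (simp add: continuous_at_imp_continuous_on differentiable_imp_continuous_within)
  then have "open ((\<lambda>x. (norm x ^ m, \<phi> x)) -` U)"
    using assms(1) by (intro continuous_open_vimage)
      (auto intro!: continuous_intros simp: continuous_on_eq_continuous_at)
  then have "open (- {0} \<inter> (\<lambda>x. (norm x ^ m, \<phi> x)) -` U)" by auto
  then show ?thesis by (simp add: Int_def Collect_conj_eq[symmetric] Compl_eq)
qed

lemma norm_grad_comp_norm_power_sq:
  fixes \<phi> :: "real^'n \<Rightarrow> real" and m :: nat and y :: "real^'n"
  defines "z \<equiv> (norm y ^ m, \<phi> y)"
  assumes "m > 0" "homogeneous_polynomial m \<phi>" "y \<noteq> 0"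
    and "(norm (grad \<phi> y))\<^sup>2 = (real m)\<^sup>2 * norm y ^ (2 * m - 2)"
    and "f differentiable (at z)"
  shows "(norm (grad (\<lambda>y. f (norm y ^ m, \<phi> y)) y))\<^sup>2
           = (real m)\<^sup>2 * (norm y ^ m / (norm y)\<^sup>2) * Afun f z"
  unfolding power2_norm_eq_inner
    inner_grad_comp_pair[OF assms(6)[unfolded z_def] assms(6)[unfolded z_def]
      grad_norm_power(1)[OF assms(4)] homogeneous_polynomial_differentiable(1)[OF assms(3)]]
    gram_norm_power_homogeneous[OF assms(2-5)]
  by (simp add: Afun_def z_def algebra_simps power2_eq_square)

lemma inner_grad_comp_norm_power_Afun:
  fixes \<phi> :: "real^'n \<Rightarrow> real" and m :: nat and y :: "real^'n"
  defines "z \<equiv> (norm y ^ m, \<phi> y)"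
  assumes "m > 0" "homogeneous_polynomial m \<phi>" "y \<noteq> 0"
    and "(norm (grad \<phi> y))\<^sup>2 = (real m)\<^sup>2 * norm y ^ (2 * m - 2)"
    and "f differentiable (at z)" "ds f differentiable (at z)" "dt f differentiable (at z)"
  shows "grad (\<lambda>y. f (norm y ^ m, \<phi> y)) y \<bullet> grad (\<lambda>y. Afun f (norm y ^ m, \<phi> y)) y
           = (real m)\<^sup>2 * (norm y ^ m / (norm y)\<^sup>2) * Bfn f z"
  unfolding inner_grad_comp_pair[OF assms(6)[unfolded z_def]
      Afun_differentiable[OF assms(7,8), unfolded z_def]
      grad_norm_power(1)[OF assms(4)] homogeneous_polynomial_differentiable(1)[OF assms(3)]]
    gram_norm_power_homogeneous[OF assms(2-5)]
  by (simp add: Bfn_def z_def algebra_simps)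

lemma inner_self_grad_comp_norm_power:
  fixes \<phi> :: "real^'n \<Rightarrow> real" and m :: nat and y :: "real^'n"
  defines "z \<equiv> (norm y ^ m, \<phi> y)"
  assumes "homogeneous_polynomial m \<phi>" "y \<noteq> 0" "f differentiable (at z)"
  shows "y \<bullet> grad (\<lambda>y. f (norm y ^ m, \<phi> y)) y = real m * hfun f z"
  unfolding grad_comp_pair(2)[OF assms(4)[unfolded z_def] grad_norm_power(1)[OF assms(3)]
      homogeneous_polynomial_differentiable(1)[OF assms(2)]]
  using assms(3) homogeneous_polynomial_euler[OF assms(2), of y]
  by (simp add: grad_norm_power inner_add_right power2_norm_eq_inner[symmetric] hfun_def z_def
      algebra_simps)

lemma laplacian_comp_norm_power:
  fixes \<phi> :: "real^'n \<Rightarrow> real" and m :: nat and y :: "real^'n"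
  defines "z \<equiv> (norm y ^ m, \<phi> y)"
  assumes "m > 0" "homogeneous_polynomial m \<phi>" "y \<noteq> 0"
    and "(norm (grad \<phi> y))\<^sup>2 = (real m)\<^sup>2 * norm y ^ (2 * m - 2)"
    and dim: "real CARD('n) = \<mu> * real m + 2"
    and lap: "laplacian \<phi> y = \<nu> * (real m)\<^sup>2 * norm y powi (int m - 2)"
    and "C2_on U f" "z \<in> U"
  shows "laplacian (\<lambda>y. f (norm y ^ m, \<phi> y)) y
           = (real m)\<^sup>2 * (norm y ^ m / (norm y)\<^sup>2) * Cfun \<mu> \<nu> f z"
proof -
  define N where "N = {x. x \<noteq> 0 \<and> (norm x ^ m, \<phi> x) \<in> U}"
  have "open N"
    using open_nonzero_preimage_norm_power_pair[OF _ assms(3)] assms(8) by (simp add: N_def C2_on_def)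
  have "laplacian (\<lambda>y. f (norm y ^ m, \<phi> y)) y
      = ds (ds f) z * (grad (\<lambda>y. norm y ^ m) y \<bullet> grad (\<lambda>y. norm y ^ m) y)
        + 2 * ds (dt f) z * (grad (\<lambda>y. norm y ^ m) y \<bullet> grad \<phi> y)
        + dt (dt f) z * (grad \<phi> y \<bullet> grad \<phi> y)
        + ds f z * laplacian (\<lambda>y. norm y ^ m) y + dt f z * laplacian \<phi> y"
    unfolding z_def
  proof (rule laplacian_comp_pair[OF \<open>open N\<close>])
    show "y \<in> N" using assms(4,9) by (simp add: N_def z_def)
  qed (use assms C2_on_differentiable C2_on_dt_ds_eq grad_norm_power(1) second_partial_norm_power(1)
      homogeneous_polynomial_differentiable in \<open>auto simp: N_def\<close>)
  also have "\<dots> = (real m)\<^sup>2 * (norm y ^ m / (norm y)\<^sup>2) * Cfun \<mu> \<nu> f z"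
    using \<open>m > 0\<close> \<open>y \<noteq> 0\<close>
    by (simp add: gram_norm_power_homogeneous[OF assms(2-5)] laplacian_norm_power lap dim
        power_int_diff power_int_of_nat Cfun_def z_def field_simps power2_eq_square)
  finally show ?thesis .
qed

lemma grad_norm_grad_comp_norm_power_sq:
  fixes \<phi> :: "real^'n \<Rightarrow> real" and m :: nat and y :: "real^'n"
  defines "z \<equiv> (norm y ^ m, \<phi> y)"
  assumes "m > 0" "homogeneous_polynomial m \<phi>" "y \<noteq> 0"
    and "\<And>x. (norm (grad \<phi> x))\<^sup>2 = (real m)\<^sup>2 * norm x ^ (2 * m - 2)"
    and "C2_on U f" "z \<in> U"
  shows "grad (\<lambda>x. (norm (grad (\<lambda>y. f (norm y ^ m, \<phi> y)) x))\<^sup>2) y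
           = (Afun f z * (real m)\<^sup>2 * ((real m - 2) * norm y ^ m / norm y ^ 3 / norm y)) *\<^sub>R y
             + ((real m)\<^sup>2 * (norm y ^ m / (norm y)\<^sup>2)) *\<^sub>R grad (\<lambda>x. Afun f (norm x ^ m, \<phi> x)) y"
proof -
  define N where "N = {x. x \<noteq> 0 \<and> (norm x ^ m, \<phi> x) \<in> U}"
  have "open N"
    using open_nonzero_preimage_norm_power_pair[OF _ assms(3)] assms(6) by (simp add: N_def C2_on_def)
  have "y \<in> N" using assms(4,7) by (simp add: N_def z_def)
  have "norm y > 0" using assms(4) by simp
  have radial: "(\<lambda>x. (real m)\<^sup>2 * (norm x ^ m / (norm x)\<^sup>2)) differentiable (at y)"
    "grad (\<lambda>x. (real m)\<^sup>2 * (norm x ^ m / (norm x)\<^sup>2)) y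
       = ((real m)\<^sup>2 * ((real m - 2) * norm y ^ m / norm y ^ 3) / norm y) *\<^sub>R y"
    using grad_radial[OF assms(4) DERIV_cmult[OF has_real_derivative_power_div_square[OF \<open>norm y > 0\<close>]]]
    by auto
  have "Afun f differentiable (at z)"
    using C2_on_differentiable[OF assms(6,7)] by (intro Afun_differentiable)
  then have A: "(\<lambda>x. Afun f (norm x ^ m, \<phi> x)) differentiable (at y)"
    unfolding z_def
    by (intro grad_comp_pair(1) grad_norm_power(1)[OF assms(4)]
        homogeneous_polynomial_differentiable(1)[OF assms(3)])
  have "grad (\<lambda>x. (norm (grad (\<lambda>y. f (norm y ^ m, \<phi> y)) x))\<^sup>2) y
      = grad (\<lambda>x. (real m)\<^sup>2 * (norm x ^ m / (norm x)\<^sup>2) * Afun f (norm x ^ m, \<phi> x)) y"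
  proof (rule grad_cong[OF \<open>open N\<close> \<open>y \<in> N\<close>])
    fix x assume "x \<in> N"
    then show "(norm (grad (\<lambda>y. f (norm y ^ m, \<phi> y)) x))\<^sup>2
        = (real m)\<^sup>2 * (norm x ^ m / (norm x)\<^sup>2) * Afun f (norm x ^ m, \<phi> x)"
      using norm_grad_comp_norm_power_sq[OF assms(2,3) _ assms(5) C2_on_differentiable(1)[OF assms(6)]]
      by (simp add: N_def)
  qed
  also have "\<dots> = (Afun f z * (real m)\<^sup>2 * ((real m - 2) * norm y ^ m / norm y ^ 3 / norm y)) *\<^sub>R y
      + ((real m)\<^sup>2 * (norm y ^ m / (norm y)\<^sup>2)) *\<^sub>R grad (\<lambda>x. Afun f (norm x ^ m, \<phi> x)) y"
    unfolding grad_mult[OF radial(1) A] radial(2) by (simp add: z_def add.commute)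
  finally show ?thesis .
qed

lemma p_laplacian_comp_norm_power:
  fixes \<phi> :: "real^'n \<Rightarrow> real" and m :: nat and y :: "real^'n"
  defines "s \<equiv> norm y ^ m" and "z \<equiv> (norm y ^ m, \<phi> y)"
  assumes "m > 0" "homogeneous_polynomial m \<phi>" "y \<noteq> 0"
    and eikonal: "\<And>x. (norm (grad \<phi> x))\<^sup>2 = (real m)\<^sup>2 * norm x ^ (2 * m - 2)"
    and dim: "real CARD('n) = \<mu> * real m + 2"
    and lap: "laplacian \<phi> y = \<nu> * (real m)\<^sup>2 * norm y powi (int m - 2)"
    and "C2_on U f" "z \<in> U"
  shows "p_laplacian p (\<lambda>y. f (norm y ^ m, \<phi> y)) y
           = (real m) ^ 4 * (s / norm y ^ 4)
             * (s * Afun f z * Cfun \<mu> \<nu> f z + (p - 2) / 2 * s * Bfn f z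
                + (real m - 2) * (p - 2) / (2 * real m) * Afun f z * hfun f z)"
proof -
  have "norm y > 0" using \<open>y \<noteq> 0\<close> by simp
  note diff = C2_on_differentiable[OF assms(9,10)[unfolded z_def]]
  have gdot: "grad (\<lambda>y. f (norm y ^ m, \<phi> y)) y
        \<bullet> grad (\<lambda>x. (norm (grad (\<lambda>y. f (norm y ^ m, \<phi> y)) x))\<^sup>2) y
      = Afun f z * (real m)\<^sup>2 * ((real m - 2) * s / norm y ^ 3 / norm y) * (real m * hfun f z)
        + (real m)\<^sup>2 * (s / (norm y)\<^sup>2) * ((real m)\<^sup>2 * (s / (norm y)\<^sup>2) * Bfn f z)"
    unfolding grad_norm_grad_comp_norm_power_sq[OF assms(3-6,9,10)[unfolded z_def]]
    by (simp add: inner_add_right inner_commute[of _ y] s_def z_def diff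
        inner_self_grad_comp_norm_power[OF assms(4,5)]
        inner_grad_comp_norm_power_Afun[OF assms(3-5) eikonal])
  show ?thesis
    unfolding p_laplacian_def gdot
      norm_grad_comp_norm_power_sq[OF assms(3-5) eikonal diff(1), folded s_def z_def]
      laplacian_comp_norm_power[OF assms(3-5) eikonal dim lap assms(9,10)[unfolded z_def],
        folded s_def z_def]
    using \<open>m > 0\<close> \<open>norm y > 0\<close>
    by (simp add: field_simps power2_eq_square power3_eq_cube eval_nat_numeral)
qed

lemma power_powr_one_minus_divide:
  fixes r :: real
  assumes "r > 0" "m > 0"
  shows "(r ^ m) powr (1 - real k / real m) = r ^ m / r ^ k"
proof -
  have "(r ^ m) powr (real k / real m) = r ^ k"
    using assms by (simp add: powr_realpow[symmetric] powr_powr)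
  then show ?thesis
    using assms by (simp add: powr_diff)
qed

theorem proposition3p1:
  fixes \<phi> :: "real^'n \<Rightarrow> real"
    and m m1 m2 :: nat
    and p :: real
    and f :: "real \<times> real \<Rightarrow> real"
    and U :: "(real \<times> real) set"
  assumes "m > 0" and "m1 > 0" and "m1 \<le> m2"
    and dim: "real CARD('n) = (real m1 + real m2) / 2 * real m + 2"
    and hom: "homogeneous_polynomial m \<phi>"
    and eik: "\<And>x. (norm (grad \<phi> x))\<^sup>2 = (real m)\<^sup>2 * norm x ^ (2 * m - 2)"
    and lap: "\<And>x. laplacian \<phi> x
                 = (real m2 - real m1) / 2 * (real m)\<^sup>2 * norm x powi (int m - 2)"
    and C2: "C2_on U f"
  shows "\<forall>x. x \<noteq> 0 \<and> (norm x ^ m, \<phi> x) \<in> U \<longrightarrow>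
           (let s = norm x ^ m; t = \<phi> x; z = (s, t);
                \<mu> = (real m1 + real m2) / 2; \<nu> = (real m2 - real m1) / 2;
                E = s * Afun f z * Cfun \<mu> \<nu> f z + (p - 2) / 2 * s * Bfn f z
                    + (real m - 2) * (p - 2) / (2 * real m) * Afun f z * hfun f z
            in p_laplacian p (\<lambda>y. f (norm y ^ m, \<phi> y)) x
                 = (real m) ^ 4 * s powr (1 - 4 / real m) * E
               \<and> (p_laplacian p (\<lambda>y. f (norm y ^ m, \<phi> y)) x = 0 \<longleftrightarrow> E = 0))"
  using p_laplacian_comp_norm_power[OF \<open>m > 0\<close> hom _ eik dim lap C2]
    power_powr_one_minus_divide[of _ m 4] \<open>m > 0\<close>
  by (simp add: Let_def)

end
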